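(* Let $n\geq 3$ and let $C_n^*$ be the bigraded complex described in the context. Let $\phi\colon C_n^*\to C_n^*$ be an $R$-linear chain map that is homogeneous of bigrading $(c_1,c_2)$, where $c_1>-2n$ and $c_2>-2n$. Then $\phi(\alpha_n^* )$ is either $0$ or of the form $c\,\alpha_n^*$ for some $c\in\mathbb{F}[\mathcal{U},\mathcal{V}]$.
   Context: Let $\mathbb{F}=\mathbb{Z}/2$ and $R=\mathbb{F}[\mathcal{U},\mathcal{V}]$, bigraded by $(\operatorname{gr}_{\mathcal{U}},\operatorname{gr}_{\mathcal{V}})$ with $\mathcal{U}$ of bigrading $(-2,0)$ and $\mathcal{V}$ of bigrading $(0,-2)$. For $n\geq 3$, $C_n^*$ is the free $R$-module with basis $\alpha^*_s$ ($1\leq s\leq 2n-1$); $\widetilde{\alpha}^*_s$ ($1\leq s\leq n-2$ and $n+1\leq s\leq 2n-2$); $b^{*,(s)}_{n-1}$ ($1\leq s\leq n-2$); $b^{*,(s)}_{n}$ ($1\leq s\leq 2n-2$); $b^{*,(s)}_{n+1}$ ($n+1\leq s\leq 2n-2$), with $R$-linear differential $\partial$ given by $\partial\alpha^*_s=0$, $\partial\widetilde{\alpha}^*_s=0$, and $\partial b^{*,(s)}_{n-1}=\mathcal{U}^{n(n-1)/2}\mathcal{V}^{n(n-1)/2}\alpha^*_s+\mathcal{V}^{n-s-1}\widetilde{\alpha}^*_s$ for $1\leq s\leq n-2$; $\partial b^{*,(s)}_{n}=\mathcal{U}^{n(n+1)/2-s}\mathcal{V}^{n(n+1)/2}\alpha^*_{s+1}+\mathcal{U}^{n}\widetilde{\alpha}^*_s$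 for $1\leq s\leq n-2$; $\partial b^{*,(s)}_{n}=\mathcal{U}^{n(n+1)/2}\mathcal{V}^{n(n-1)/2-n+s+1}\alpha^*_s+\mathcal{U}^{n(n+1)/2-s}\mathcal{V}^{n(n+1)/2}\alpha^*_{s+1}$ for $n-1\leq s\leq n$; $\partial b^{*,(s)}_{n}=\mathcal{U}^{n(n+1)/2}\mathcal{V}^{n(n-1)/2-n+s+1}\alpha^*_s+\mathcal{V}^{n}\widetilde{\alpha}^*_s$ for $n+1\leq s\leq 2n-2$; $\partial b^{*,(s)}_{n+1}=\mathcal{U}^{n(n-1)/2}\mathcal{V}^{n(n-1)/2}\alpha^*_{s+1}+\mathcal{U}^{s-n}\widetilde{\alpha}^*_s$ for $n+1\leq s\leq 2n-2$. The basis elements are assigned bigradings so that $\partial$ is homogeneous of bigrading $(-1,-1)$ (unique up to an overall shift; any such choice is fixed). A map is homogeneous of bigrading $(c_1,c_2)$ if it sends homogeneous elements of bigrading $(a,b)$ to homogeneous elements of bigrading $(a+c_1,b+c_2)$. *)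

theory Defs
  imports "HOL-Library.Z2" "HOL-Computational_Algebra.Polynomial"
begin

text \<open>The ground ring R = F[U,V] with F = Z/2 (type bit), realised as
  polynomials in V whose coefficients are polynomials in U.
  The monomial U^a V^b is stored as coefficient 1 at V-degree b, U-degree a.\<close>

type_synonym ring = "bit poly poly"

definition monoUV :: "nat \<Rightarrow> nat \<Rightarrow> ring" where
  "monoUV a b = monom (monom 1 a) b"

text \<open>Generator labels: Al s = alpha*_s, At s = tilde alpha*_s,
  B k s = b*^{(s)}_k (k is the actual subscript n-1, n or n+1).\<close>

datatype gen = Al nat | At nat | B nat nat

definition basis :: "nat \<Rightarrow> gen set" where
  "basis n =
     {Al s | s. 1 \<le> s \<and> s \<le> 2*n - 1}
   \<union> {At s | s. (1 \<le> s \<and> s \<le> n - 2) \<or> (n + 1 \<le> s \<and> s \<le> 2*n - 2)}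
   \<union> {B (n - 1) s | s. 1 \<le> s \<and> s \<le> n - 2}
   \<union> {B n s | s. 1 \<le> s \<and> s \<le> 2*n - 2}
   \<union> {B (n + 1) s | s. n + 1 \<le> s \<and> s \<le> 2*n - 2}"

type_synonym elt = "gen \<Rightarrow> ring"

definition carrier :: "nat \<Rightarrow> elt set" where
  "carrier n = {x. \<forall>g. g \<notin> basis n \<longrightarrow> x g = 0}"

definition bvec :: "gen \<Rightarrow> elt" where
  "bvec g = (\<lambda>h. if h = g then 1 else 0)"

definition scal :: "ring \<Rightarrow> elt \<Rightarrow> elt" where
  "scal r x = (\<lambda>h. r * x h)"

text \<open>Two-term element  p * e_g + q * e_h  (g \<noteq> h in all uses).\<close>

definition two :: "ring \<Rightarrow> gen \<Rightarrow> ring \<Rightarrow> gen \<Rightarrow> elt" where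
  "two p g q h = (\<lambda>k. (if k = g then p else 0) + (if k = h then q else 0))"

definition dgen :: "nat \<Rightarrow> gen \<Rightarrow> elt" where
  "dgen n g = (case g of
      Al s \<Rightarrow> (\<lambda>_. 0)
    | At s \<Rightarrow> (\<lambda>_. 0)
    | B k s \<Rightarrow>
        (if k = n - 1 \<and> 1 \<le> s \<and> s \<le> n - 2 then
           two (monoUV (n*(n-1) div 2) (n*(n-1) div 2)) (Al s) (monoUV 0 (n - s - 1)) (At s)
         else if k = n \<and> 1 \<le> s \<and> s \<le> n - 2 then
           two (monoUV (n*(n+1) div 2 - s) (n*(n+1) div 2)) (Al (s+1)) (monoUV n 0) (At s)
         else if k = n \<and> n - 1 \<le> s \<and> s \<le> n then
           two (monoUV (n*(n+1) div 2) (n*(n-1) div 2 + s + 1 - n)) (Al s)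
               (monoUV (n*(n+1) div 2 - s) (n*(n+1) div 2)) (Al (s+1))
         else if k = n \<and> n + 1 \<le> s \<and> s \<le> 2*n - 2 then
           two (monoUV (n*(n+1) div 2) (n*(n-1) div 2 + s + 1 - n)) (Al s) (monoUV 0 n) (At s)
         else if k = n + 1 \<and> n + 1 \<le> s \<and> s \<le> 2*n - 2 then
           two (monoUV (n*(n-1) div 2) (n*(n-1) div 2)) (Al (s+1)) (monoUV (s - n) 0) (At s)
         else (\<lambda>_. 0)))"

definition dd :: "nat \<Rightarrow> elt \<Rightarrow> elt" where
  "dd n x = (\<lambda>h. \<Sum>g\<in>basis n. x g * dgen n g h)"

text \<open>x is homogeneous of bigrading d (w.r.t. generator bigradings gr):
  every monomial U^a V^b occurring in the coefficient of a generator h has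
  bigrading gr h + (-2a,-2b) = d.  (0 is homogeneous of every bigrading.)\<close>

definition homog :: "(gen \<Rightarrow> int \<times> int) \<Rightarrow> int \<times> int \<Rightarrow> elt \<Rightarrow> bool" where
  "homog gr d x \<longleftrightarrow>
     (\<forall>h a b. coeff (coeff (x h) b) a \<noteq> 0 \<longrightarrow>
        (fst (gr h) - 2 * int a, snd (gr h) - 2 * int b) = d)"

definition admissible_grading :: "nat \<Rightarrow> (gen \<Rightarrow> int \<times> int) \<Rightarrow> bool" where
  "admissible_grading n gr \<longleftrightarrow>
     (\<forall>g\<in>basis n. homog gr (fst (gr g) - 1, snd (gr g) - 1) (dgen n g))"

definition R_linear :: "nat \<Rightarrow> (elt \<Rightarrow> elt) \<Rightarrow> bool" where
  "R_linear n \<phi> \<longleftrightarrow>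
     (\<forall>x\<in>carrier n. \<phi> x \<in> carrier n)
   \<and> (\<forall>x\<in>carrier n. \<forall>y\<in>carrier n. \<phi> (\<lambda>h. x h + y h) = (\<lambda>h. \<phi> x h + \<phi> y h))
   \<and> (\<forall>r. \<forall>x\<in>carrier n. \<phi> (scal r x) = scal r (\<phi> x))"

definition chain_map :: "nat \<Rightarrow> (elt \<Rightarrow> elt) \<Rightarrow> bool" where
  "chain_map n \<phi> \<longleftrightarrow> (\<forall>x\<in>carrier n. \<phi> (dd n x) = dd n (\<phi> x))"

definition homogeneous_map :: "(gen \<Rightarrow> int \<times> int) \<Rightarrow> nat \<Rightarrow> int \<times> int \<Rightarrow> (elt \<Rightarrow> elt) \<Rightarrow> bool" where
  "homogeneous_map gr n c \<phi> \<longleftrightarrow>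
     (\<forall>x\<in>carrier n. \<forall>d. homog gr d x \<longrightarrow> homog gr (fst d + fst c, snd d + snd c) (\<phi> x))"

end

theory Submission
  imports Defs
begin

(* The differential pins down the relative bigradings of the generators. Following the
   differentials of b^{(s)}_{n-1} and b^{(s)}_n for s < n, every generator indexed by
   s < n, and b^{(n-1)}_n, has gr_V at least 2n below gr_V(alpha^*_n); symmetrically,
   following b^{(s)}_n and b^{(s)}_{n+1} for s > n, every generator indexed by s > n, and
   b^{(n)}_n, has gr_U at least 2n below gr_U(alpha^*_n). The coefficient of phi(alpha^*_n)
   at a generator h consists of monomials U^a V^b with gr h - (2a, 2b) = gr alpha^*_n + (c1, c2),
   so gr h dominates gr alpha^*_n - (2n - 1, 2n - 1) componentwise, which forces h = alpha^*_n. *)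

lemma coeff_coeff_monoUV:
  "coeff (coeff (monoUV a b) b') a' = (if a' = a \<and> b' = b then 1 else 0)"
  by (simp add: monoUV_def)

lemma homog_two_monoUV:
  assumes "homog gr d (two (monoUV a b) g (monoUV a' b') h)" and "g \<noteq> h"
  shows "gr g = (fst d + 2 * int a, snd d + 2 * int b)"
    and "gr h = (fst d + 2 * int a', snd d + 2 * int b')"
proof -
  have "coeff (coeff (two (monoUV a b) g (monoUV a' b') h g) b) a \<noteq> 0"
   and "coeff (coeff (two (monoUV a b) g (monoUV a' b') h h) b') a' \<noteq> 0"
    using assms(2) by (simp_all add: two_def coeff_coeff_monoUV)
  then show "gr g = (fst d + 2 * int a, snd d + 2 * int b)"
        and "gr h = (fst d + 2 * int a', snd d + 2 * int b')"
    using assms(1) unfolding homog_def by (force simp: prod_eq_iff)+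
qed

lemma homog_bvec: "homog gr (gr g) (bvec g)"
  by (auto simp: homog_def bvec_def split: if_splits)

lemma homog_nonzero_grading_ge:
  assumes "homog gr d x" and "x h \<noteq> 0"
  shows "fst d \<le> fst (gr h) \<and> snd d \<le> snd (gr h)"
proof -
  let ?p = "lead_coeff (x h)"
  have "coeff ?p (degree ?p) \<noteq> 0"
    using assms(2) by simp
  then have "(fst (gr h) - 2 * int (degree ?p), snd (gr h) - 2 * int (degree (x h))) = d"
    using assms(1) unfolding homog_def by blast
  then show ?thesis
    by auto
qed

lemma carrier_eq_scal_bvec:
  assumes "x \<in> carrier n" and "\<And>h. h \<in> basis n \<Longrightarrow> h \<noteq> g \<Longrightarrow> x h = 0"
  shows "x = scal (x g) (bvec g)"
proof
  fix h
  show "x h = scal (x g) (bvec g) h"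
    using assms by (cases "h = g") (auto simp: carrier_def scal_def bvec_def)
qed

lemma triangular_Suc_eq: "(n::nat) * (n + 1) div 2 = n * (n - 1) div 2 + n"
proof (cases n)
  case (Suc m)
  then have "n * (n + 1) = n * (n - 1) + 2 * n" by (simp add: algebra_simps)
  then show ?thesis by simp
qed simp

lemma int_triangular_Suc: "int (n * (n + 1) div 2) = int (n * (n - 1) div 2) + int n"
  by (simp only: triangular_Suc_eq of_nat_add)

lemma triangular_pos: "(n::nat) \<ge> 2 \<Longrightarrow> 1 \<le> n * (n - 1) div 2"
proof -
  assume "n \<ge> 2"
  then have "2 \<le> n * (n - 1)" using mult_le_mono[of 2 n 1 "n - 1"] by simp
  then show ?thesis by simp
qed

context
  fixes n :: nat
  assumes n_ge_3: "n \<ge> 3"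
begin

lemma dgen_B_pred_low:
  "1 \<le> s \<Longrightarrow> s \<le> n - 2 \<Longrightarrow> dgen n (B (n - 1) s) =
     two (monoUV (n * (n - 1) div 2) (n * (n - 1) div 2)) (Al s) (monoUV 0 (n - s - 1)) (At s)"
  using n_ge_3 by (auto simp: dgen_def)

lemma dgen_B_low:
  "1 \<le> s \<Longrightarrow> s \<le> n - 2 \<Longrightarrow> dgen n (B n s) =
     two (monoUV (n * (n + 1) div 2 - s) (n * (n + 1) div 2)) (Al (s + 1)) (monoUV n 0) (At s)"
  using n_ge_3 by (auto simp: dgen_def)

lemma dgen_B_mid:
  "n - 1 \<le> s \<Longrightarrow> s \<le> n \<Longrightarrow> dgen n (B n s) =
     two (monoUV (n * (n + 1) div 2) (n * (n - 1) div 2 + s + 1 - n)) (Al s)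
         (monoUV (n * (n + 1) div 2 - s) (n * (n + 1) div 2)) (Al (s + 1))"
  using n_ge_3 by (auto simp: dgen_def)

lemma dgen_B_high:
  "n + 1 \<le> s \<Longrightarrow> s \<le> 2 * n - 2 \<Longrightarrow> dgen n (B n s) =
     two (monoUV (n * (n + 1) div 2) (n * (n - 1) div 2 + s + 1 - n)) (Al s) (monoUV 0 n) (At s)"
  using n_ge_3 by (auto simp: dgen_def)

lemma dgen_B_succ_high:
  "n + 1 \<le> s \<Longrightarrow> s \<le> 2 * n - 2 \<Longrightarrow> dgen n (B (n + 1) s) =
     two (monoUV (n * (n - 1) div 2) (n * (n - 1) div 2)) (Al (s + 1)) (monoUV (s - n) 0) (At s)"
  using n_ge_3 by (auto simp: dgen_def)

lemma basis_B_mem: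
  "1 \<le> s \<Longrightarrow> s \<le> n - 2 \<Longrightarrow> B (n - 1) s \<in> basis n"
  "1 \<le> s \<Longrightarrow> s \<le> 2 * n - 2 \<Longrightarrow> B n s \<in> basis n"
  "n + 1 \<le> s \<Longrightarrow> s \<le> 2 * n - 2 \<Longrightarrow> B (n + 1) s \<in> basis n"
  by (auto simp: basis_def)

context
  fixes gr :: "gen \<Rightarrow> int \<times> int"
  assumes adm: "admissible_grading n gr"
begin

lemma grading_dgen_two:
  assumes "g \<in> basis n" and "dgen n g = two (monoUV a b) h (monoUV a' b') h'" and "h \<noteq> h'"
  shows "gr h = (fst (gr g) - 1 + 2 * int a, snd (gr g) - 1 + 2 * int b)"
    and "gr h' = (fst (gr g) - 1 + 2 * int a', snd (gr g) - 1 + 2 * int b')"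
proof -
  have "homog gr (fst (gr g) - 1, snd (gr g) - 1) (dgen n g)"
    using adm assms(1) by (simp add: admissible_grading_def)
  from homog_two_monoUV[OF this[unfolded assms(2)] assms(3)]
  show "gr h = (fst (gr g) - 1 + 2 * int a, snd (gr g) - 1 + 2 * int b)"
    and "gr h' = (fst (gr g) - 1 + 2 * int a', snd (gr g) - 1 + 2 * int b')"
    by simp_all
qed

lemma snd_grading_le_Al_Suc:
  assumes "1 \<le> s" and "s \<le> n - 2" and "h \<in> {Al s, At s, B (n - 1) s, B n s}"
  shows "snd (gr h) \<le> snd (gr (Al (s + 1)))"
proof -
  note from_B_pred = grading_dgen_two[OF basis_B_mem(1)[OF assms(1,2)] dgen_B_pred_low[OF assms(1,2)]]
  note from_B = grading_dgen_two[OF basis_B_mem(2) dgen_B_low[OF assms(1,2)]]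
  show ?thesis
    using from_B_pred from_B assms n_ge_3 int_triangular_Suc[of n] by auto
qed

lemma fst_grading_le_Al:
  assumes "n + 1 \<le> s" and "s \<le> 2 * n - 2" and "h \<in> {Al (s + 1), At s, B n s, B (n + 1) s}"
  shows "fst (gr h) \<le> fst (gr (Al s))"
proof -
  note from_B = grading_dgen_two[OF basis_B_mem(2) dgen_B_high[OF assms(1,2)]]
  note from_B_succ = grading_dgen_two[OF basis_B_mem(3)[OF assms(1,2)] dgen_B_succ_high[OF assms(1,2)]]
  show ?thesis
    using from_B from_B_succ assms n_ge_3 int_triangular_Suc[of n] by auto
qed

lemma grading_near_Al_n:
  shows "snd (gr (Al (n - 1))) \<le> snd (gr (Al n)) - 2 * int n"
    and "snd (gr (B n (n - 1))) \<le> snd (gr (Al n)) - 2 * int n"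
    and "fst (gr (Al (n + 1))) \<le> fst (gr (Al n)) - 2 * int n"
    and "fst (gr (B n n)) \<le> fst (gr (Al n)) - 2 * int n"
proof -
  have "1 \<le> int (n * (n - 1) div 2)"
    using triangular_pos n_ge_3 by simp
  note triangular = this int_triangular_Suc[of n]
  note from_B_n_minus_1 = grading_dgen_two[OF basis_B_mem(2) dgen_B_mid, of "n - 1"]
  note from_B_n_n = grading_dgen_two[OF basis_B_mem(2) dgen_B_mid, of n]
  show "snd (gr (Al (n - 1))) \<le> snd (gr (Al n)) - 2 * int n"
    and "snd (gr (B n (n - 1))) \<le> snd (gr (Al n)) - 2 * int n"
    using from_B_n_minus_1 n_ge_3 triangular by auto
  show "fst (gr (Al (n + 1))) \<le> fst (gr (Al n)) - 2 * int n"
    and "fst (gr (B n n)) \<le> fst (gr (Al n)) - 2 * int n"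
    using from_B_n_n n_ge_3 triangular by auto
qed

lemma snd_grading_Al_below:
  assumes "s \<le> n - 1" and "1 \<le> s"
  shows "snd (gr (Al s)) \<le> snd (gr (Al n)) - 2 * int n"
  using assms
proof (induction rule: inc_induct)
  case base
  show ?case by (rule grading_near_Al_n(1))
next
  case (step s)
  then have "snd (gr (Al s)) \<le> snd (gr (Al (s + 1)))"
    by (intro snd_grading_le_Al_Suc) auto
  with step show ?case by simp
qed

lemma fst_grading_Al_above:
  assumes "n + 1 \<le> s" and "s \<le> 2 * n - 1"
  shows "fst (gr (Al s)) \<le> fst (gr (Al n)) - 2 * int n"
  using assms
proof (induction rule: dec_induct)
  case base
  show ?case by (rule grading_near_Al_n(3))
next
  case (step s)
  then have "fst (gr (Al (s + 1))) \<le> fst (gr (Al s))"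
    by (intro fst_grading_le_Al) auto
  with step show ?case by simp
qed

lemma grading_far_from_Al_n:
  assumes "h \<in> basis n" and "h \<noteq> Al n"
  shows "fst (gr h) \<le> fst (gr (Al n)) - 2 * int n \<or> snd (gr h) \<le> snd (gr (Al n)) - 2 * int n"
proof -
  have low: "snd (gr h) \<le> snd (gr (Al n)) - 2 * int n"
    if "1 \<le> s" "s \<le> n - 2" "h \<in> {Al s, At s, B (n - 1) s, B n s}" for s
  proof -
    have "s + 1 \<le> n - 1"
      using that(2) n_ge_3 by linarith
    then show ?thesis
      using snd_grading_le_Al_Suc[OF that] snd_grading_Al_below[of "s + 1"] by simp
  qed
  have high: "fst (gr h) \<le> fst (gr (Al n)) - 2 * int n"
    if "n + 1 \<le> s" "s \<le> 2 * n - 2" "h \<in> {Al (s + 1), At s, B n s, B (n + 1) s}" for s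
  proof -
    have "s \<le> 2 * n - 1"
      using that(2) by linarith
    then show ?thesis
      using fst_grading_le_Al[OF that] fst_grading_Al_above[of s] that(1) by simp
  qed
  consider (Al) s where "h = Al s" "1 \<le> s" "s \<le> 2 * n - 1" "s \<noteq> n"
    | (At) s where "h = At s" "1 \<le> s \<and> s \<le> n - 2 \<or> n + 1 \<le> s \<and> s \<le> 2 * n - 2"
    | (B) k s where "h = B k s" "k = n - 1 \<and> s \<le> n - 2 \<or> k = n \<or> k = n + 1 \<and> n + 1 \<le> s"
        "1 \<le> s" "s \<le> 2 * n - 2"
    using assms unfolding basis_def by auto
  then show ?thesis
  proof cases
    case Al
    then show ?thesis
      using snd_grading_Al_below[of s] fst_grading_Al_above[of s] by (cases "s < n") auto
  next
    case At
    then show ?thesis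
      using low[of s] high[of s] by auto
  next
    case B
    then consider "s \<le> n - 2" | "s = n - 1" | "s = n" | "n + 1 \<le> s"
      by linarith
    then show ?thesis
      using B low[of s] high[of s] grading_near_Al_n by cases auto
  qed
qed

end

end

theorem lemma2p9:
  fixes n :: nat and gr :: "gen \<Rightarrow> int \<times> int" and \<phi> :: "elt \<Rightarrow> elt" and c1 c2 :: int
  assumes "n \<ge> 3"
    and "admissible_grading n gr"
    and "R_linear n \<phi>"
    and "chain_map n \<phi>"
    and "homogeneous_map gr n (c1, c2) \<phi>"
    and "c1 > - 2 * int n" and "c2 > - 2 * int n"
  shows "\<phi> (bvec (Al n)) = (\<lambda>_. 0) \<or> (\<exists>c :: ring. \<phi> (bvec (Al n)) = scal c (bvec (Al n)))"
proof -
  have "bvec (Al n) \<in> carrier n"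
    using assms(1) by (auto simp: carrier_def bvec_def basis_def)
  then have in_carrier: "\<phi> (bvec (Al n)) \<in> carrier n"
    and homog: "homog gr (fst (gr (Al n)) + c1, snd (gr (Al n)) + c2) (\<phi> (bvec (Al n)))"
    using assms(3,5) homog_bvec[of gr "Al n"]
    unfolding R_linear_def homogeneous_map_def by auto
  have "\<phi> (bvec (Al n)) h = 0" if "h \<in> basis n" "h \<noteq> Al n" for h
    using homog_nonzero_grading_ge[OF homog, of h] grading_far_from_Al_n[OF assms(1,2) that] assms(6,7)
    by fastforce
  then show ?thesis
    using carrier_eq_scal_bvec[OF in_carrier] by blast
qed

end
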